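(* Let $\varphi,\phi$ be GFG-QPTL formulas. Then $\varphi$ is $\exists\forall$-satisfiable iff $\varphi$ is $\forall\exists$-satisfiable. Moreover, $\varphi\Rightarrow^{\exists\forall}\phi$ iff $\varphi\Rightarrow^{\forall\exists}\phi$, and $\varphi\equiv^{\exists\forall}\phi$ iff $\varphi\equiv^{\forall\exists}\phi$.
   Context: Let $AP$ be a set of atomic propositions and $\mathbb B=\{\top,\bot\}$. A temporal valuation is a function $f:\mathbb N\to\mathbb B$. An assignment is a partial function $\chi:AP\rightharpoonup(\mathbb N\to\mathbb B)$; $\mathrm{Asg}$ is the set of all assignments, $\mathrm{Asg}(P)$ the set of assignments with domain exactly $P\subseteq AP$. For an assignment $\chi$, $p\in AP$ and a temporal valuation $f$, $\chi[p\mapsto f]$ is the assignment that agrees with $\chi$ except that it maps $p$ to $f$. A hyperassignment is a set $\mathcal X$ with $\emptyset\neq\mathcal X\subseteq 2^{\mathrm{Asg}(P)}$ and $\emptyset\notin\mathcal X$, for some $P\subseteq AP$; this $P$ is denoted $\mathrm{ap}(\mathcal X)$. $\mathrm{HAsg}$ is the set of all hyperassignments, $\mathrm{HAsg}(P)$ those with $\mathrm{ap}(\mathcal X)=P$, and $\mathrm{HAsg}_\supseteq(P)$ those with $\mathrm{ap}(\mathcal X)\supseteq P$. A choice function for $\mathcal X$ is a map $c:\mathcal X\to\mathrm{Asg}$ with $c(X)\in X$ for all $X\in\mathcal X$. The dual of $\mathcal X$ is $\overline{\mathcal X}=\{\mathrm{img}(c): c\text{ a choice function for }\mathcal X\}$.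 $\mathrm{par}(\mathcal X)$ is the set of pairs $(\mathcal X_1,\mathcal X_2)$ of (possibly empty) subsets of $\mathcal X$ with $\mathcal X_1\cap\mathcal X_2=\emptyset$ and $\mathcal X_1\cup\mathcal X_2=\mathcal X$. A functor over $P\subseteq AP$ is a function $F:\mathrm{Asg}(P)\to(\mathbb N\to\mathbb B)$; $\mathrm{Fnc}(P)$ is the set of all of them. $\mathrm{ext}(\chi,F,p)=\chi[p\mapsto F(\chi)]$ and $\mathrm{ext}(X,F,p)=\{\mathrm{ext}(\chi,F,p):\chi\in X\}$. For $\chi_1,\chi_2\in\mathrm{Asg}(P)$, $p\in P$, $k\in\mathbb N$: $\chi_1\approx^{>k}_p\chi_2$ iff $\chi_1(q)=\chi_2(q)$ for all $q\in P\setminus\{p\}$ and $\chi_1(p)(t)=\chi_2(p)(t)$ for all $t\le k$; $\chi_1\approx^{\ge k}_p\chi_2$ is defined the same way with $t<k$ in place of $t\le k$. $F\in\mathrm{Fnc}(P)$ is behavioral (resp. strongly behavioral) w.r.t. $p\in P$ if $F(\chi_1)(k)=F(\chi_2)(k)$ for all $k\in\mathbb N$ and all $\chi_1,\chi_2$ with $\chi_1\approx^{>k}_p\chi_2$ (resp. $\chi_1\approx^{\ge k}_p\chi_2$). A quantifier specification is a pair $\sigma=\langle P_B,P_S\rangle$ of subsets of $AP$; $\mathrm{Fnc}_\sigma(P)$ is the set of $F\in\mathrm{Fnc}(P)$ that are behavioral w.r.t. every $p\in P_B\cap P$ and strongly behavioral w.r.t. every $p\in P_S\cap P$. $\mathrm{ext}_\sigma(\mathcal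 X,p)=\{\mathrm{ext}(X,F,p):X\in\mathcal X,\ F\in\mathrm{Fnc}_\sigma(\mathrm{ap}(\mathcal X))\}$. GFG-QPTL formulas are generated by $\varphi::=\psi\mid\neg\varphi\mid\varphi\wedge\varphi\mid\varphi\vee\varphi\mid\exists p{:}\sigma.\varphi\mid\forall p{:}\sigma.\varphi$, where $\psi$ is an LTL formula over $AP$, $p\in AP$ and $\sigma$ a quantifier specification; we also write $\exists^\sigma p.\varphi$, $\forall^\sigma p.\varphi$. QPTL formulas are those in which every specification is $\langle\emptyset,\emptyset\rangle$. $\mathrm{free}(\varphi)$ is the set of free propositions. $\chi\models_{LTL}\psi$ iff the infinite word whose $t$-th letter is the valuation $q\mapsto\chi(q)(t)$ satisfies $\psi$ in the standard LTL sense. Alternation flags are $\exists\forall$ and $\forall\exists$; $\bar\alpha$ is the flag different from $\alpha$. For a GFG-QPTL formula $\varphi$, $\mathcal X\in\mathrm{HAsg}_\supseteq(\mathrm{free}(\varphi))$ and flag $\alpha$, $\mathcal X\models^\alpha\varphi$ is defined inductively: (1) for LTL $\psi$: $\mathcal X\models^{\exists\forall}\psi$ iff there is $X\in\mathcal X$ with $\chi\models_{LTL}\psi$ for all $\chi\in X$; $\mathcal X\models^{\forall\exists}\psi$ iff for every $X\in\mathcal X$ there is $\chi\in X$ with $\chi\models_{LTL}\psi$; (2) $\mathcal X\models^\alpha\neg\phi$ iff not $\mathcal X\models^{\bar\alpha}\phi$; (3) $\mathcal X\models^{\exists\forall}\phi_1\wedge\phi_2$ iff for every $(\mathcal X_1,\mathcal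 X_2)\in\mathrm{par}(\mathcal X)$, either ($\mathcal X_1\ne\emptyset$ and $\mathcal X_1\models^{\exists\forall}\phi_1$) or ($\mathcal X_2\ne\emptyset$ and $\mathcal X_2\models^{\exists\forall}\phi_2$); $\mathcal X\models^{\forall\exists}\phi_1\wedge\phi_2$ iff $\overline{\mathcal X}\models^{\exists\forall}\phi_1\wedge\phi_2$; (4) $\mathcal X\models^{\forall\exists}\phi_1\vee\phi_2$ iff there is $(\mathcal X_1,\mathcal X_2)\in\mathrm{par}(\mathcal X)$ such that ($\mathcal X_1\neq\emptyset$ implies $\mathcal X_1\models^{\forall\exists}\phi_1$) and ($\mathcal X_2\neq\emptyset$ implies $\mathcal X_2\models^{\forall\exists}\phi_2$); $\mathcal X\models^{\exists\forall}\phi_1\vee\phi_2$ iff $\overline{\mathcal X}\models^{\forall\exists}\phi_1\vee\phi_2$; (5) $\mathcal X\models^{\exists\forall}\exists p{:}\sigma.\phi$ iff $\mathrm{ext}_\sigma(\mathcal X,p)\models^{\exists\forall}\phi$; $\mathcal X\models^{\forall\exists}\exists p{:}\sigma.\phi$ iff $\overline{\mathcal X}\models^{\exists\forall}\exists p{:}\sigma.\phi$; (6) $\mathcal X\models^{\forall\exists}\forall p{:}\sigma.\phi$ iff $\mathrm{ext}_\sigma(\mathcal X,p)\models^{\forall\exists}\phi$; $\mathcal X\models^{\exists\forall}\forall p{:}\sigma.\phi$ iff $\overline{\mathcal X}\models^{\forall\exists}\forall p{:}\sigma.\phi$. A GFG-QPTL formula $\varphi$ is $\alpha$-satisfiable if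 $\mathcal X\models^\alpha\varphi$ for some $\mathcal X\in\mathrm{HAsg}(\mathrm{free}(\varphi))$. $\varphi\Rightarrow^\alpha\phi$ ($\alpha$-implication) holds iff $\mathrm{free}(\varphi)=\mathrm{free}(\phi)$ and for all $\mathcal X\in\mathrm{HAsg}_\supseteq(\mathrm{free}(\varphi))$, $\mathcal X\models^\alpha\varphi$ implies $\mathcal X\models^\alpha\phi$; $\varphi\equiv^\alpha\phi$ ($\alpha$-equivalence) holds iff $\mathrm{free}(\varphi)=\mathrm{free}(\phi)$ and for all such $\mathcal X$, $\mathcal X\models^\alpha\varphi$ iff $\mathcal X\models^\alpha\phi$. *)

theory Defs
  imports Main
begin

type_synonym tval = "nat \<Rightarrow> bool"
type_synonym 'a asg = "'a \<Rightarrow> tval option"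
type_synonym 'a hasg = "'a asg set set"

definition Asg :: "'a set \<Rightarrow> 'a asg set" where
  "Asg P = {\<chi>. dom \<chi> = P}"

definition HAsg :: "'a set \<Rightarrow> 'a hasg set" where
  "HAsg P = {XX. XX \<noteq> {} \<and> {} \<notin> XX \<and> (\<forall>X\<in>XX. X \<subseteq> Asg P)}"

definition HAsg_sup :: "'a set \<Rightarrow> 'a hasg set" where
  "HAsg_sup P = {XX. \<exists>Q. P \<subseteq> Q \<and> XX \<in> HAsg Q}"

definition ap :: "'a hasg \<Rightarrow> 'a set" where
  "ap XX = dom (SOME \<chi>. \<exists>X\<in>XX. \<chi> \<in> X)"

definition dual :: "'a hasg \<Rightarrow> 'a hasg" where
  "dual XX = {c ` XX | c. \<forall>X\<in>XX. c X \<in> X}"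

definition par :: "'a hasg \<Rightarrow> ('a hasg \<times> 'a hasg) set" where
  "par XX = {(X1, X2). X1 \<subseteq> XX \<and> X2 \<subseteq> XX \<and> X1 \<inter> X2 = {} \<and> X1 \<union> X2 = XX}"

type_synonym 'a fnc = "'a asg \<Rightarrow> tval"
type_synonym 'a qspec = "'a set \<times> 'a set"

definition ext_asg :: "'a asg \<Rightarrow> 'a fnc \<Rightarrow> 'a \<Rightarrow> 'a asg" where
  "ext_asg \<chi> F p = \<chi>(p \<mapsto> F \<chi>)"

definition ext_set :: "'a asg set \<Rightarrow> 'a fnc \<Rightarrow> 'a \<Rightarrow> 'a asg set" where
  "ext_set X F p = (\<lambda>\<chi>. ext_asg \<chi> F p) ` X"

definition approx_gt :: "'a set \<Rightarrow> 'a \<Rightarrow> nat \<Rightarrow> 'a asg \<Rightarrow> 'a asg \<Rightarrow> bool" where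
  "approx_gt P p k \<chi>1 \<chi>2 \<longleftrightarrow>
     (\<forall>q\<in>P - {p}. \<chi>1 q = \<chi>2 q) \<and> (\<forall>t\<le>k. the (\<chi>1 p) t = the (\<chi>2 p) t)"

definition approx_ge :: "'a set \<Rightarrow> 'a \<Rightarrow> nat \<Rightarrow> 'a asg \<Rightarrow> 'a asg \<Rightarrow> bool" where
  "approx_ge P p k \<chi>1 \<chi>2 \<longleftrightarrow>
     (\<forall>q\<in>P - {p}. \<chi>1 q = \<chi>2 q) \<and> (\<forall>t<k. the (\<chi>1 p) t = the (\<chi>2 p) t)"

text \<open>A functor over P is a map from Asg(P); we represent it by a total function whose
  values outside Asg(P) are irrelevant.\<close>

definition behavioral :: "'a set \<Rightarrow> 'a fnc \<Rightarrow> 'a \<Rightarrow> bool" where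
  "behavioral P F p \<longleftrightarrow> (\<forall>k. \<forall>\<chi>1\<in>Asg P. \<forall>\<chi>2\<in>Asg P.
      approx_gt P p k \<chi>1 \<chi>2 \<longrightarrow> F \<chi>1 k = F \<chi>2 k)"

definition strongly_behavioral :: "'a set \<Rightarrow> 'a fnc \<Rightarrow> 'a \<Rightarrow> bool" where
  "strongly_behavioral P F p \<longleftrightarrow> (\<forall>k. \<forall>\<chi>1\<in>Asg P. \<forall>\<chi>2\<in>Asg P.
      approx_ge P p k \<chi>1 \<chi>2 \<longrightarrow> F \<chi>1 k = F \<chi>2 k)"

definition Fnc_spec :: "'a qspec \<Rightarrow> 'a set \<Rightarrow> 'a fnc set" where
  "Fnc_spec \<sigma> P = {F. (\<forall>p\<in>fst \<sigma> \<inter> P. behavioral P F p) \<and>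
                      (\<forall>p\<in>snd \<sigma> \<inter> P. strongly_behavioral P F p)}"

definition ext_spec :: "'a qspec \<Rightarrow> 'a hasg \<Rightarrow> 'a \<Rightarrow> 'a hasg" where
  "ext_spec \<sigma> XX p = {ext_set X F p | X F. X \<in> XX \<and> F \<in> Fnc_spec \<sigma> (ap XX)}"

datatype 'a ltl = LTrue | LProp 'a | LNot "'a ltl" | LAnd "'a ltl" "'a ltl"
  | LOr "'a ltl" "'a ltl" | LNext "'a ltl" | LUntil "'a ltl" "'a ltl"

primrec ltl_sem :: "(nat \<Rightarrow> 'a \<Rightarrow> bool) \<Rightarrow> nat \<Rightarrow> 'a ltl \<Rightarrow> bool" where
  "ltl_sem w i LTrue = True"
| "ltl_sem w i (LProp q) = w i q"
| "ltl_sem w i (LNot \<psi>) = (\<not> ltl_sem w i \<psi>)"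
| "ltl_sem w i (LAnd \<psi>1 \<psi>2) = (ltl_sem w i \<psi>1 \<and> ltl_sem w i \<psi>2)"
| "ltl_sem w i (LOr \<psi>1 \<psi>2) = (ltl_sem w i \<psi>1 \<or> ltl_sem w i \<psi>2)"
| "ltl_sem w i (LNext \<psi>) = ltl_sem w (Suc i) \<psi>"
| "ltl_sem w i (LUntil \<psi>1 \<psi>2) =
     (\<exists>j\<ge>i. ltl_sem w j \<psi>2 \<and> (\<forall>k. i \<le> k \<and> k < j \<longrightarrow> ltl_sem w k \<psi>1))"

primrec ltl_atoms :: "'a ltl \<Rightarrow> 'a set" where
  "ltl_atoms LTrue = {}"
| "ltl_atoms (LProp q) = {q}"
| "ltl_atoms (LNot \<psi>) = ltl_atoms \<psi>"
| "ltl_atoms (LAnd \<psi>1 \<psi>2) = ltl_atoms \<psi>1 \<union> ltl_atoms \<psi>2"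
| "ltl_atoms (LOr \<psi>1 \<psi>2) = ltl_atoms \<psi>1 \<union> ltl_atoms \<psi>2"
| "ltl_atoms (LNext \<psi>) = ltl_atoms \<psi>"
| "ltl_atoms (LUntil \<psi>1 \<psi>2) = ltl_atoms \<psi>1 \<union> ltl_atoms \<psi>2"

text \<open>The word of an assignment: letter t is q \<mapsto> \<chi>(q)(t) (propositions outside the
  domain are read as false; they never occur in evaluated formulas).\<close>
definition asg_word :: "'a asg \<Rightarrow> nat \<Rightarrow> 'a \<Rightarrow> bool" where
  "asg_word \<chi> t q = (case \<chi> q of Some f \<Rightarrow> f t | None \<Rightarrow> False)"

definition models_ltl :: "'a asg \<Rightarrow> 'a ltl \<Rightarrow> bool" where
  "models_ltl \<chi> \<psi> \<longleftrightarrow> ltl_sem (asg_word \<chi>) 0 \<psi>"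

datatype 'a gfg = Ltl "'a ltl" | Neg "'a gfg" | Conj "'a gfg" "'a gfg" | Disj "'a gfg" "'a gfg"
  | Ex 'a "'a qspec" "'a gfg" | All 'a "'a qspec" "'a gfg"

primrec free :: "'a gfg \<Rightarrow> 'a set" where
  "free (Ltl \<psi>) = ltl_atoms \<psi>"
| "free (Neg \<phi>) = free \<phi>"
| "free (Conj \<phi>1 \<phi>2) = free \<phi>1 \<union> free \<phi>2"
| "free (Disj \<phi>1 \<phi>2) = free \<phi>1 \<union> free \<phi>2"
| "free (Ex p \<sigma> \<phi>) = free \<phi> - {p}"
| "free (All p \<sigma> \<phi>) = free \<phi> - {p}"

datatype flag = EA | AE

fun flip :: "flag \<Rightarrow> flag" where
  "flip EA = AE" | "flip AE = EA"

primrec sat :: "'a gfg \<Rightarrow> flag \<Rightarrow> 'a hasg \<Rightarrow> bool" where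
  "sat (Ltl \<psi>) \<alpha> XX =
     (case \<alpha> of EA \<Rightarrow> (\<exists>X\<in>XX. \<forall>\<chi>\<in>X. models_ltl \<chi> \<psi>)
               | AE \<Rightarrow> (\<forall>X\<in>XX. \<exists>\<chi>\<in>X. models_ltl \<chi> \<psi>))"
| "sat (Neg \<phi>) \<alpha> XX = (\<not> sat \<phi> (flip \<alpha>) XX)"
| "sat (Conj \<phi>1 \<phi>2) \<alpha> XX =
     (\<forall>(X1, X2)\<in>par (if \<alpha> = EA then XX else dual XX).
        (X1 \<noteq> {} \<and> sat \<phi>1 EA X1) \<or> (X2 \<noteq> {} \<and> sat \<phi>2 EA X2))"
| "sat (Disj \<phi>1 \<phi>2) \<alpha> XX =
     (\<exists>(X1, X2)\<in>par (if \<alpha> = AE then XX else dual XX).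
        (X1 \<noteq> {} \<longrightarrow> sat \<phi>1 AE X1) \<and> (X2 \<noteq> {} \<longrightarrow> sat \<phi>2 AE X2))"
| "sat (Ex p \<sigma> \<phi>) \<alpha> XX =
     sat \<phi> EA (ext_spec \<sigma> (if \<alpha> = EA then XX else dual XX) p)"
| "sat (All p \<sigma> \<phi>) \<alpha> XX =
     sat \<phi> AE (ext_spec \<sigma> (if \<alpha> = AE then XX else dual XX) p)"

definition satisfiable :: "flag \<Rightarrow> 'a gfg \<Rightarrow> bool" where
  "satisfiable \<alpha> \<phi> \<longleftrightarrow> (\<exists>XX\<in>HAsg (free \<phi>). sat \<phi> \<alpha> XX)"

definition alpha_implies :: "flag \<Rightarrow> 'a gfg \<Rightarrow> 'a gfg \<Rightarrow> bool" where
  "alpha_implies \<alpha> \<phi> \<phi>' \<longleftrightarrow> free \<phi> = free \<phi>' \<and>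
     (\<forall>XX\<in>HAsg_sup (free \<phi>). sat \<phi> \<alpha> XX \<longrightarrow> sat \<phi>' \<alpha> XX)"

definition alpha_equiv :: "flag \<Rightarrow> 'a gfg \<Rightarrow> 'a gfg \<Rightarrow> bool" where
  "alpha_equiv \<alpha> \<phi> \<phi>' \<longleftrightarrow> free \<phi> = free \<phi>' \<and>
     (\<forall>XX\<in>HAsg_sup (free \<phi>). sat \<phi> \<alpha> XX \<longleftrightarrow> sat \<phi>' \<alpha> XX)"

end

theory Submission
  imports Defs
begin

text \<open>Say that YY refines XX if every member of XX contains a member of YY. Satisfaction under
  \<open>\<exists>\<forall>\<close> passes from XX to its refinements, and satisfaction under \<open>\<forall>\<exists>\<close> passes back from a
  refinement to XX. Since XX and the dual of its dual refine each other, no formula distinguishes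
  them. Every connective other than negation evaluates one flag as the other flag on the dual (for
  LTL formulas this is the choice principle \<open>(\<exists>X\<in>XX. \<forall>\<chi>\<in>X. P \<chi>) \<longleftrightarrow> (\<forall>Z\<in>dual XX. \<exists>\<chi>\<in>Z. P \<chi>)\<close>),
  so XX satisfies a formula under one flag iff its dual does under the other. As dualization
  preserves hyperassignments over a fixed domain, all three equivalences follow.\<close>

definition refines :: "'a hasg \<Rightarrow> 'a hasg \<Rightarrow> bool" where
  "refines YY XX \<longleftrightarrow> (\<forall>X\<in>XX. \<exists>Y\<in>YY. Y \<subseteq> X)"

text \<open>Unlike \<^const>\<open>HAsg\<close>, this allows empty members and an empty family, which arise from
  partitions and from the dual of the empty family.\<close>

definition hasg_over :: "'a set \<Rightarrow> 'a hasg \<Rightarrow> bool" where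
  "hasg_over Q XX \<longleftrightarrow> (\<forall>X\<in>XX. X \<subseteq> Asg Q)"

lemma dualI: "\<forall>X\<in>XX. c X \<in> X \<Longrightarrow> c ` XX \<in> dual XX"
  by (auto simp: dual_def)

lemma dualE:
  assumes "Z \<in> dual XX"
  obtains c where "\<forall>X\<in>XX. c X \<in> X" "Z = c ` XX"
  using assms by (auto simp: dual_def)

lemma ball_dual_bex_iff: "(\<forall>Z\<in>dual XX. \<exists>\<chi>\<in>Z. P \<chi>) \<longleftrightarrow> (\<exists>X\<in>XX. \<forall>\<chi>\<in>X. P \<chi>)"
proof
  assume all: "\<forall>Z\<in>dual XX. \<exists>\<chi>\<in>Z. P \<chi>"
  show "\<exists>X\<in>XX. \<forall>\<chi>\<in>X. P \<chi>"
  proof (rule ccontr)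
    assume "\<not> (\<exists>X\<in>XX. \<forall>\<chi>\<in>X. P \<chi>)"
    then have "\<forall>X\<in>XX. \<exists>\<chi>. \<chi> \<in> X \<and> \<not> P \<chi>" by blast
    from bchoice[OF this] obtain c where c: "\<forall>X\<in>XX. c X \<in> X \<and> \<not> P (c X)" ..
    then have "c ` XX \<in> dual XX" by (intro dualI) blast
    with all obtain \<chi> where "\<chi> \<in> c ` XX" "P \<chi>" by blast
    with c show False by blast
  qed
next
  assume "\<exists>X\<in>XX. \<forall>\<chi>\<in>X. P \<chi>"
  then obtain X where X: "X \<in> XX" "\<forall>\<chi>\<in>X. P \<chi>" by blast
  show "\<forall>Z\<in>dual XX. \<exists>\<chi>\<in>Z. P \<chi>"
  proof
    fix Z assume "Z \<in> dual XX"
    then obtain c where "\<forall>X\<in>XX. c X \<in> X" "Z = c ` XX" by (rule dualE)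
    with X show "\<exists>\<chi>\<in>Z. P \<chi>" by blast
  qed
qed

lemma refines_dual_dual: "refines (dual (dual XX)) XX"
  unfolding refines_def
proof
  fix X assume X: "X \<in> XX"
  have "\<exists>\<chi>. \<chi> \<in> Z \<and> \<chi> \<in> X" if "Z \<in> dual XX" for Z
  proof -
    from that obtain c where "\<forall>X\<in>XX. c X \<in> X" "Z = c ` XX" by (rule dualE)
    with X show ?thesis by blast
  qed
  then have "\<forall>Z\<in>dual XX. \<exists>\<chi>. \<chi> \<in> Z \<and> \<chi> \<in> X" by blast
  from bchoice[OF this] obtain d where d: "\<forall>Z\<in>dual XX. d Z \<in> Z \<and> d Z \<in> X" ..
  then have "d ` dual XX \<in> dual (dual XX)" by (intro dualI) blast
  moreover have "d ` dual XX \<subseteq> X" using d by blast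
  ultimately show "\<exists>Y\<in>dual (dual XX). Y \<subseteq> X" by blast
qed

lemma dual_dual_refines: "refines XX (dual (dual XX))"
  unfolding refines_def
proof
  fix W assume "W \<in> dual (dual XX)"
  then obtain d where "\<forall>Z\<in>dual XX. d Z \<in> Z" "W = d ` dual XX" by (rule dualE)
  then have "\<forall>Z\<in>dual XX. \<exists>\<chi>\<in>Z. \<chi> \<in> W" by blast
  then show "\<exists>X\<in>XX. X \<subseteq> W"
    unfolding ball_dual_bex_iff by blast
qed

lemma refines_dual:
  assumes "refines YY XX"
  shows "refines (dual XX) (dual YY)"
  unfolding refines_def
proof
  fix Z assume "Z \<in> dual YY"
  then obtain c where c: "\<forall>Y\<in>YY. c Y \<in> Y" "Z = c ` YY" by (rule dualE)
  have "\<forall>X\<in>XX. \<exists>Y. Y \<in> YY \<and> Y \<subseteq> X" using assms unfolding refines_def by blast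
  from bchoice[OF this] obtain g where g: "\<forall>X\<in>XX. g X \<in> YY \<and> g X \<subseteq> X" ..
  have "(c \<circ> g) ` XX \<in> dual XX" using c g by (intro dualI) auto
  moreover have "(c \<circ> g) ` XX \<subseteq> Z" using c g by auto
  ultimately show "\<exists>Y\<in>dual XX. Y \<subseteq> Z" by blast
qed

lemma par_refines:
  assumes "refines YY XX" "(Y1, Y2) \<in> par YY"
  obtains X1 X2 where "(X1, X2) \<in> par XX" "refines Y1 X1" "refines Y2 X2"
    "X1 \<noteq> {} \<Longrightarrow> Y1 \<noteq> {}" "X2 \<noteq> {} \<Longrightarrow> Y2 \<noteq> {}"
proof -
  define X1 where "X1 = {X\<in>XX. \<exists>Y\<in>Y1. Y \<subseteq> X}"
  have "YY = Y1 \<union> Y2" using assms(2) unfolding par_def by auto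
  then have "\<exists>Y\<in>Y2. Y \<subseteq> X" if "X \<in> XX - X1" for X
    using assms(1) that unfolding refines_def X1_def by blast
  then have 2: "refines Y2 (XX - X1)" "XX - X1 \<noteq> {} \<Longrightarrow> Y2 \<noteq> {}"
    unfolding refines_def by blast+
  have 1: "refines Y1 X1" "X1 \<noteq> {} \<Longrightarrow> Y1 \<noteq> {}"
    unfolding refines_def X1_def by blast+
  have "(X1, XX - X1) \<in> par XX" unfolding par_def X1_def by auto
  from that[OF this 1(1) 2(1) 1(2) 2(2)] show ?thesis .
qed

lemma hasg_over_dual: "hasg_over Q XX \<Longrightarrow> hasg_over Q (dual XX)"
  unfolding hasg_over_def dual_def by blast

lemma hasg_over_par: "hasg_over Q XX \<Longrightarrow> (X1, X2) \<in> par XX \<Longrightarrow> hasg_over Q X1 \<and> hasg_over Q X2"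
  unfolding hasg_over_def par_def by auto

lemma hasg_over_ext_spec: "hasg_over Q XX \<Longrightarrow> hasg_over (insert p Q) (ext_spec \<sigma> XX p)"
  unfolding hasg_over_def ext_spec_def ext_set_def ext_asg_def Asg_def
  by (auto simp: subset_iff split: if_splits; blast)

lemma ap_hasg_over:
  assumes "hasg_over Q XX" "X \<in> XX" "X \<noteq> {}"
  shows "ap XX = Q"
proof -
  have "\<exists>\<chi>. \<exists>X\<in>XX. \<chi> \<in> X" using assms(2,3) by blast
  then have "\<exists>X\<in>XX. (SOME \<chi>. \<exists>X\<in>XX. \<chi> \<in> X) \<in> X" by (rule someI_ex)
  then show ?thesis using assms(1) unfolding ap_def hasg_over_def Asg_def by blast
qed

lemma const_in_Fnc_spec: "(\<lambda>_ _. False) \<in> Fnc_spec \<sigma> P"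
  unfolding Fnc_spec_def behavioral_def strongly_behavioral_def by auto

lemma ext_spec_refines:
  assumes "hasg_over Q XX" "hasg_over Q YY" "refines YY XX"
  shows "refines (ext_spec \<sigma> YY p) (ext_spec \<sigma> XX p)"
  unfolding refines_def
proof
  fix Z assume "Z \<in> ext_spec \<sigma> XX p"
  then obtain X F where XF: "Z = ext_set X F p" "X \<in> XX" "F \<in> Fnc_spec \<sigma> (ap XX)"
    by (auto simp: ext_spec_def)
  obtain Y where Y: "Y \<in> YY" "Y \<subseteq> X" using assms(3) XF(2) unfolding refines_def by blast
  show "\<exists>W\<in>ext_spec \<sigma> YY p. W \<subseteq> Z"
  proof (cases "Y = {}")
    case True
    then have "ext_set Y (\<lambda>_ _. False) p = {}" by (simp add: ext_set_def)
    moreover have "ext_set Y (\<lambda>_ _. False) p \<in> ext_spec \<sigma> YY p"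
      unfolding ext_spec_def using Y const_in_Fnc_spec by blast
    ultimately show ?thesis by auto
  next
    case False
    with Y XF have "ap YY = ap XX"
      using ap_hasg_over[OF assms(1)] ap_hasg_over[OF assms(2)] by blast
    then have "ext_set Y F p \<in> ext_spec \<sigma> YY p"
      unfolding ext_spec_def using Y XF by auto
    moreover have "ext_set Y F p \<subseteq> Z" using XF Y by (auto simp: ext_set_def)
    ultimately show ?thesis by blast
  qed
qed

lemma refines_transfer_ext_spec:
  assumes "hasg_over Q XX" "hasg_over Q YY" "refines YY XX"
    and transfer: "\<And>Q XX YY. hasg_over Q XX \<Longrightarrow> hasg_over Q YY \<Longrightarrow> refines YY XX \<Longrightarrow> T XX YY"
  shows "T (ext_spec \<sigma> XX p) (ext_spec \<sigma> YY p)"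
    and "T (ext_spec \<sigma> (dual YY) p) (ext_spec \<sigma> (dual XX) p)"
proof -
  show "T (ext_spec \<sigma> XX p) (ext_spec \<sigma> YY p)"
    by (rule transfer[OF hasg_over_ext_spec[OF assms(1)] hasg_over_ext_spec[OF assms(2)]
          ext_spec_refines[OF assms(1-3)]])
  have duals: "hasg_over Q (dual YY)" "hasg_over Q (dual XX)" "refines (dual XX) (dual YY)"
    using assms(1-3) by (simp_all add: hasg_over_dual refines_dual)
  show "T (ext_spec \<sigma> (dual YY) p) (ext_spec \<sigma> (dual XX) p)"
    by (rule transfer[OF hasg_over_ext_spec[OF duals(1)] hasg_over_ext_spec[OF duals(2)]
          ext_spec_refines[OF duals]])
qed

lemma par_all_refines:
  assumes "hasg_over Q XX" "hasg_over Q YY" "refines YY XX"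
    and mono1: "\<And>A B. hasg_over Q A \<Longrightarrow> hasg_over Q B \<Longrightarrow> refines B A \<Longrightarrow> P1 A \<Longrightarrow> P1 B"
    and mono2: "\<And>A B. hasg_over Q A \<Longrightarrow> hasg_over Q B \<Longrightarrow> refines B A \<Longrightarrow> P2 A \<Longrightarrow> P2 B"
    and "\<forall>(X1, X2)\<in>par XX. (X1 \<noteq> {} \<and> P1 X1) \<or> (X2 \<noteq> {} \<and> P2 X2)"
  shows "\<forall>(Y1, Y2)\<in>par YY. (Y1 \<noteq> {} \<and> P1 Y1) \<or> (Y2 \<noteq> {} \<and> P2 Y2)"
proof -
  have "(Y1 \<noteq> {} \<and> P1 Y1) \<or> (Y2 \<noteq> {} \<and> P2 Y2)" if Y: "(Y1, Y2) \<in> par YY" for Y1 Y2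
  proof (rule disjCI)
    assume Y2: "\<not> (Y2 \<noteq> {} \<and> P2 Y2)"
    obtain X1 X2 where X: "(X1, X2) \<in> par XX" "refines Y1 X1" "refines Y2 X2"
      "X1 \<noteq> {} \<Longrightarrow> Y1 \<noteq> {}" "X2 \<noteq> {} \<Longrightarrow> Y2 \<noteq> {}"
      using par_refines[OF assms(3) Y] by blast
    have over: "hasg_over Q X1" "hasg_over Q X2" "hasg_over Q Y1" "hasg_over Q Y2"
      using hasg_over_par[OF assms(1) X(1)] hasg_over_par[OF assms(2) Y] by auto
    have "\<not> (X2 \<noteq> {} \<and> P2 X2)"
      using mono2[OF over(2,4) X(3)] X(5) Y2 by blast
    then have "X1 \<noteq> {}" "P1 X1" using assms(6) X(1) by auto
    then show "Y1 \<noteq> {} \<and> P1 Y1" using mono1[OF over(1,3) X(2)] X(4) by auto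
  qed
  then show ?thesis by blast
qed

lemma par_ex_refines:
  assumes "hasg_over Q XX" "hasg_over Q YY" "refines YY XX"
    and anti1: "\<And>A B. hasg_over Q A \<Longrightarrow> hasg_over Q B \<Longrightarrow> refines B A \<Longrightarrow> P1 B \<Longrightarrow> P1 A"
    and anti2: "\<And>A B. hasg_over Q A \<Longrightarrow> hasg_over Q B \<Longrightarrow> refines B A \<Longrightarrow> P2 B \<Longrightarrow> P2 A"
    and "\<exists>(Y1, Y2)\<in>par YY. (Y1 \<noteq> {} \<longrightarrow> P1 Y1) \<and> (Y2 \<noteq> {} \<longrightarrow> P2 Y2)"
  shows "\<exists>(X1, X2)\<in>par XX. (X1 \<noteq> {} \<longrightarrow> P1 X1) \<and> (X2 \<noteq> {} \<longrightarrow> P2 X2)"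
proof -
  obtain Y1 Y2 where Y: "(Y1, Y2) \<in> par YY" "Y1 \<noteq> {} \<longrightarrow> P1 Y1" "Y2 \<noteq> {} \<longrightarrow> P2 Y2"
    using assms(6) by blast
  obtain X1 X2 where X: "(X1, X2) \<in> par XX" "refines Y1 X1" "refines Y2 X2"
    "X1 \<noteq> {} \<Longrightarrow> Y1 \<noteq> {}" "X2 \<noteq> {} \<Longrightarrow> Y2 \<noteq> {}"
    using par_refines[OF assms(3) Y(1)] by blast
  have over: "hasg_over Q X1" "hasg_over Q X2" "hasg_over Q Y1" "hasg_over Q Y2"
    using hasg_over_par[OF assms(1) X(1)] hasg_over_par[OF assms(2) Y(1)] by auto
  have "X1 \<noteq> {} \<longrightarrow> P1 X1" "X2 \<noteq> {} \<longrightarrow> P2 X2"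
    using anti1[OF over(1,3) X(2)] anti2[OF over(2,4) X(3)] X(4,5) Y(2,3) by auto
  with X(1) show ?thesis by blast
qed

lemma sat_refines_mono:
  assumes "hasg_over Q XX" "hasg_over Q YY" "refines YY XX"
  shows "(sat \<phi> EA XX \<longrightarrow> sat \<phi> EA YY) \<and> (sat \<phi> AE YY \<longrightarrow> sat \<phi> AE XX)"
  using assms
proof (induction \<phi> arbitrary: Q XX YY)
  case (Ltl \<psi>)
  then have "\<exists>Y\<in>YY. Y \<subseteq> X" if "X \<in> XX" for X
    using that unfolding refines_def by blast
  then show ?case by simp (meson subsetD)
next
  case (Neg \<phi>)
  then show ?case by auto
next
  case (Conj \<phi>1 \<phi>2)
  have mono: "sat \<phi>1 EA A \<Longrightarrow> sat \<phi>1 EA B" "sat \<phi>2 EA A \<Longrightarrow> sat \<phi>2 EA B"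
    if "hasg_over Q A" "hasg_over Q B" "refines B A" for A B
    using Conj.IH(1)[OF that] Conj.IH(2)[OF that] by blast+
  note duals = hasg_over_dual[OF Conj.prems(1)] hasg_over_dual[OF Conj.prems(2)]
    refines_dual[OF Conj.prems(3)]
  show ?case
  proof (intro conjI impI)
    assume "sat (Conj \<phi>1 \<phi>2) EA XX"
    then show "sat (Conj \<phi>1 \<phi>2) EA YY"
      using par_all_refines[OF Conj.prems mono] by simp
  next
    assume "sat (Conj \<phi>1 \<phi>2) AE YY"
    then show "sat (Conj \<phi>1 \<phi>2) AE XX"
      using par_all_refines[OF duals(2,1,3) mono] by simp
  qed
next
  case (Disj \<phi>1 \<phi>2)
  have anti: "sat \<phi>1 AE B \<Longrightarrow> sat \<phi>1 AE A" "sat \<phi>2 AE B \<Longrightarrow> sat \<phi>2 AE A"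
    if "hasg_over Q A" "hasg_over Q B" "refines B A" for A B
    using Disj.IH(1)[OF that] Disj.IH(2)[OF that] by blast+
  note duals = hasg_over_dual[OF Disj.prems(1)] hasg_over_dual[OF Disj.prems(2)]
    refines_dual[OF Disj.prems(3)]
  show ?case
  proof (intro conjI impI)
    assume "sat (Disj \<phi>1 \<phi>2) EA XX"
    then show "sat (Disj \<phi>1 \<phi>2) EA YY"
      using par_ex_refines[OF duals(2,1,3) anti] by simp
  next
    assume "sat (Disj \<phi>1 \<phi>2) AE YY"
    then show "sat (Disj \<phi>1 \<phi>2) AE XX"
      using par_ex_refines[OF Disj.prems anti] by simp
  qed
next
  case (Ex p \<sigma> \<phi>)
  show ?case
    using refines_transfer_ext_spec[where T = "\<lambda>XX YY. (sat \<phi> EA XX \<longrightarrow> sat \<phi> EA YY) \<and>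
      (sat \<phi> AE YY \<longrightarrow> sat \<phi> AE XX)", OF Ex.prems Ex.IH] by simp
next
  case (All p \<sigma> \<phi>)
  show ?case
    using refines_transfer_ext_spec[where T = "\<lambda>XX YY. (sat \<phi> EA XX \<longrightarrow> sat \<phi> EA YY) \<and>
      (sat \<phi> AE YY \<longrightarrow> sat \<phi> AE XX)", OF All.prems All.IH] by simp
qed

lemma sat_dual_dual: "hasg_over Q XX \<Longrightarrow> sat \<phi> \<alpha> (dual (dual XX)) = sat \<phi> \<alpha> XX"
  using sat_refines_mono[OF _ hasg_over_dual[OF hasg_over_dual] refines_dual_dual]
    sat_refines_mono[OF hasg_over_dual[OF hasg_over_dual] _ dual_dual_refines]
  by (cases \<alpha>) blast+

lemma flip_flip [simp]: "flip (flip \<alpha>) = \<alpha>"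
  by (cases \<alpha>) simp_all

lemma flag_cases_flip: "\<alpha> = \<beta> \<or> \<alpha> = flip \<beta>"
  by (cases \<alpha>; cases \<beta>) simp_all

lemma sat_dual_flip_if_defined_by_dual:
  assumes "hasg_over Q XX" and defined_by_dual: "\<And>YY. sat \<psi> (flip \<beta>) YY = sat \<psi> \<beta> (dual YY)"
  shows "sat \<psi> (flip \<alpha>) (dual XX) = sat \<psi> \<alpha> XX"
  using flag_cases_flip[of \<alpha> \<beta>]
proof
  assume "\<alpha> = \<beta>"
  then show ?thesis using defined_by_dual[of "dual XX"] sat_dual_dual[OF assms(1)] by simp
next
  assume "\<alpha> = flip \<beta>"
  then show ?thesis using defined_by_dual[of XX] by simp
qed

lemma sat_dual_flip:
  assumes "hasg_over Q XX"
  shows "sat \<phi> (flip \<alpha>) (dual XX) = sat \<phi> \<alpha> XX"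
  using assms
proof (induction \<phi> arbitrary: \<alpha> XX)
  case (Ltl \<psi>)
  show ?case
    by (rule sat_dual_flip_if_defined_by_dual[OF Ltl.prems, where \<beta> = AE])
      (simp add: ball_dual_bex_iff)
next
  case (Neg \<phi>)
  show ?case using Neg.IH[OF Neg.prems, of "flip \<alpha>"] by simp
next
  case (Conj \<phi>1 \<phi>2)
  show ?case by (rule sat_dual_flip_if_defined_by_dual[OF Conj.prems, where \<beta> = EA]) simp
next
  case (Disj \<phi>1 \<phi>2)
  show ?case by (rule sat_dual_flip_if_defined_by_dual[OF Disj.prems, where \<beta> = AE]) simp
next
  case (Ex p \<sigma> \<phi>)
  show ?case by (rule sat_dual_flip_if_defined_by_dual[OF Ex.prems, where \<beta> = EA]) simp
next
  case (All p \<sigma> \<phi>)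
  show ?case by (rule sat_dual_flip_if_defined_by_dual[OF All.prems, where \<beta> = AE]) simp
qed

lemma HAsg_dual:
  assumes "XX \<in> HAsg Q"
  shows "dual XX \<in> HAsg Q"
proof -
  have "\<forall>X\<in>XX. \<exists>\<chi>. \<chi> \<in> X" using assms by (auto simp: HAsg_def)
  from bchoice[OF this] obtain c where "\<forall>X\<in>XX. c X \<in> X" ..
  then have "c ` XX \<in> dual XX" by (rule dualI)
  with assms show ?thesis unfolding HAsg_def dual_def by blast
qed

lemma hasg_over_HAsg: "XX \<in> HAsg Q \<Longrightarrow> hasg_over Q XX"
  unfolding HAsg_def hasg_over_def by blast

lemma hasg_over_HAsg_sup: "XX \<in> HAsg_sup P \<Longrightarrow> \<exists>Q. hasg_over Q XX"
  unfolding HAsg_sup_def using hasg_over_HAsg by blast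

lemma HAsg_sup_dual: "XX \<in> HAsg_sup P \<Longrightarrow> dual XX \<in> HAsg_sup P"
  unfolding HAsg_sup_def using HAsg_dual by blast

lemma satisfiable_flip:
  assumes "satisfiable \<alpha> \<phi>"
  shows "satisfiable (flip \<alpha>) \<phi>"
proof -
  obtain XX where XX: "XX \<in> HAsg (free \<phi>)" "sat \<phi> \<alpha> XX"
    using assms unfolding satisfiable_def by blast
  then have "sat \<phi> (flip \<alpha>) (dual XX)"
    using sat_dual_flip[OF hasg_over_HAsg] by blast
  with HAsg_dual[OF XX(1)] show ?thesis unfolding satisfiable_def by blast
qed

lemma ball_HAsg_sup_flip:
  assumes "\<forall>XX\<in>HAsg_sup P. R (sat \<phi> \<alpha> XX) (sat \<phi>' \<alpha> XX)"
  shows "\<forall>XX\<in>HAsg_sup P. R (sat \<phi> (flip \<alpha>) XX) (sat \<phi>' (flip \<alpha>) XX)"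
proof
  fix XX assume XX: "XX \<in> HAsg_sup P"
  then obtain Q where "hasg_over Q XX" using hasg_over_HAsg_sup by blast
  then have flip_dual: "sat \<psi> (flip \<alpha>) XX = sat \<psi> \<alpha> (dual XX)" for \<psi>
    using sat_dual_flip[of Q XX \<psi> "flip \<alpha>"] by (cases \<alpha>) simp_all
  have "R (sat \<phi> \<alpha> (dual XX)) (sat \<phi>' \<alpha> (dual XX))"
    using assms HAsg_sup_dual[OF XX] by blast
  then show "R (sat \<phi> (flip \<alpha>) XX) (sat \<phi>' (flip \<alpha>) XX)"
    unfolding flip_dual .
qed

lemma ball_HAsg_sup_EA_iff_AE:
  "(\<forall>XX\<in>HAsg_sup P. R (sat \<phi> EA XX) (sat \<phi>' EA XX)) \<longleftrightarrow>
   (\<forall>XX\<in>HAsg_sup P. R (sat \<phi> AE XX) (sat \<phi>' AE XX))"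
  using ball_HAsg_sup_flip[of P R \<phi> EA \<phi>'] ball_HAsg_sup_flip[of P R \<phi> AE \<phi>']
  unfolding flip.simps by (rule iffI)

theorem mainTheorem10:
  fixes \<phi> \<phi>' :: "'a gfg"
  shows "(satisfiable EA \<phi> \<longleftrightarrow> satisfiable AE \<phi>) \<and>
         (alpha_implies EA \<phi> \<phi>' \<longleftrightarrow> alpha_implies AE \<phi> \<phi>') \<and>
         (alpha_equiv EA \<phi> \<phi>' \<longleftrightarrow> alpha_equiv AE \<phi> \<phi>')"
proof (intro conjI)
  show "satisfiable EA \<phi> \<longleftrightarrow> satisfiable AE \<phi>"
    using satisfiable_flip[of EA \<phi>] satisfiable_flip[of AE \<phi>] by auto
  show "alpha_implies EA \<phi> \<phi>' \<longleftrightarrow> alpha_implies AE \<phi> \<phi>'"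
    unfolding alpha_implies_def
    by (rule conj_cong[OF refl ball_HAsg_sup_EA_iff_AE[where R = "(\<longrightarrow>)"]])
  show "alpha_equiv EA \<phi> \<phi>' \<longleftrightarrow> alpha_equiv AE \<phi> \<phi>'"
    unfolding alpha_equiv_def
    by (rule conj_cong[OF refl ball_HAsg_sup_EA_iff_AE[where R = "(=)"]])
qed

end
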